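(* Let $\tilde{\bm C}_n,\tilde{\bm C}_{n+1}$ be symmetric positive-definite tensors, $\Delta t_n>0$, and $\bm\Gamma^1_n,\dots,\bm\Gamma^m_n$ symmetric tensors. For $\alpha=1,\dots,m$ define $$\bm\Gamma^\alpha_{n+1}:=\frac{\Delta t_n}{\eta^\alpha+\mu^\alpha\Delta t_n/2}\left(\frac{\tilde{\bm S}^\alpha_{\mathrm{iso}}(\tilde{\bm C}_{n+1})+\tilde{\bm S}^\alpha_{\mathrm{iso}}(\tilde{\bm C}_{n})}{2}-\hat{\bm S}^\alpha_0-\Big(\frac{\mu^\alpha}{2}-\frac{\eta^\alpha}{\Delta t_n}\Big)\bm\Gamma^\alpha_n+\mu^\alpha\bm I\right)$$ and $\bm\Gamma^\alpha_{n+\frac12}:=\frac12(\bm\Gamma^\alpha_n+\bm\Gamma^\alpha_{n+1})$. Then $$G_{\mathrm{iso}}(\tilde{\bm C}_{n+1},\bm\Gamma^1_{n+1},\dots,\bm\Gamma^m_{n+1})-G_{\mathrm{iso}}(\tilde{\bm C}_{n+1},\bm\Gamma^1_{n+\frac12},\dots,\bm\Gamma^m_{n+\frac12})+G_{\mathrm{iso}}(\tilde{\bm C}_{n},\bm\Gamma^1_{n+\frac12},\dots,\bm\Gamma^m_{n+\frac12})-G_{\mathrm{iso}}(\tilde{\bm C}_{n},\bm\Gamma^1_{n},\dots,\bm\Gamma^m_{n})=-\frac12\Delta t_n\sum_{\alpha=1}^m\eta^\alpha\left|\frac{\bm\Gamma^\alpha_{n+1}-\bm\Gamma^\alpha_n}{\Delta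 t_n}\right|^2.$$
   Context: $|\bm A|=(\bm A:\bm A)^{1/2}$; $\bm I$ the identity tensor. Fix $m\ge1$; for each $\alpha$: $\mu^\alpha>0$, $\eta^\alpha>0$, constant symmetric tensor $\hat{\bm S}^\alpha_0$, smooth scalar function $G^\alpha$ on symmetric positive-definite tensors with $\tilde{\bm S}^\alpha_{\mathrm{iso}}(\tilde{\bm C}):=2\partial G^\alpha/\partial\tilde{\bm C}$; $G^\infty_{\mathrm{iso}}$ a smooth scalar function. $\Upsilon^\alpha(\tilde{\bm C},\bm\Gamma):=\frac{1}{4\mu^\alpha}|\tilde{\bm S}^\alpha_{\mathrm{iso}}(\tilde{\bm C})-\hat{\bm S}^\alpha_0-\mu^\alpha(\bm\Gamma-\bm I)|^2$ and $G_{\mathrm{iso}}(\tilde{\bm C},\bm\Gamma^1,\dots,\bm\Gamma^m):=G^\infty_{\mathrm{iso}}(\tilde{\bm C})+\sum_{\alpha=1}^m\Upsilon^\alpha(\tilde{\bm C},\bm\Gamma^\alpha)$. *)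

theory Defs
  imports "HOL-Analysis.Analysis"
begin

type_synonym tensor = "real^3^3"

definition ddot :: "tensor \<Rightarrow> tensor \<Rightarrow> real" where
  "ddot A B = (\<Sum>i\<in>UNIV. \<Sum>j\<in>UNIV. A$i$j * B$i$j)"

definition tnorm :: "tensor \<Rightarrow> real" where
  "tnorm A = sqrt (ddot A A)"

definition sym_tensor :: "tensor \<Rightarrow> bool" where
  "sym_tensor A \<longleftrightarrow> transpose A = A"

definition spd_tensor :: "tensor \<Rightarrow> bool" where
  "spd_tensor A \<longleftrightarrow> sym_tensor A \<and> (\<forall>x::real^3. x \<noteq> 0 \<longrightarrow> x \<bullet> (A *v x) > 0)"

text \<open>Upsilon^alpha(C, Gamma), with S = tilde S^alpha_iso, S0 = hat S^alpha_0, mu = mu^alpha.\<close>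
definition Upsilon :: "real \<Rightarrow> (tensor \<Rightarrow> tensor) \<Rightarrow> tensor \<Rightarrow> tensor \<Rightarrow> tensor \<Rightarrow> real" where
  "Upsilon mu S S0 C \<Gamma> = 1 / (4 * mu) * (tnorm (S C - S0 - mu *\<^sub>R (\<Gamma> - mat 1)))\<^sup>2"

definition G_iso :: "nat \<Rightarrow> (tensor \<Rightarrow> real) \<Rightarrow> (nat \<Rightarrow> real) \<Rightarrow> (nat \<Rightarrow> tensor \<Rightarrow> tensor)
     \<Rightarrow> (nat \<Rightarrow> tensor) \<Rightarrow> tensor \<Rightarrow> (nat \<Rightarrow> tensor) \<Rightarrow> real" where
  "G_iso m Ginf mu S S0 C \<Gamma> = Ginf C + (\<Sum>\<alpha>=1..m. Upsilon (mu \<alpha>) (S \<alpha>) (S0 \<alpha>) C (\<Gamma> \<alpha>))"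

end

theory Submission
  imports Defs
begin

text \<open>Write \<open>X\<^sub>k = S(C\<^sub>k) - S\<^sub>0 + \<mu> I\<close>, so that \<open>\<Upsilon>(C\<^sub>k, \<Gamma>) = |X\<^sub>k - \<mu> \<Gamma>|\<^sup>2 / (4\<mu>)\<close>.
  The update rule for \<open>\<Gamma>\<^sub>n\<^sub>+\<^sub>1\<close> is the midpoint discretisation
  \<open>(\<eta>/\<Delta>t)(\<Gamma>\<^sub>1 - \<Gamma>\<^sub>0) + (\<mu>/2)(\<Gamma>\<^sub>1 + \<Gamma>\<^sub>0) = (X\<^sub>1 + X\<^sub>0)/2\<close> of the evolution law.
  As \<open>\<Upsilon>\<close> is quadratic in \<open>\<Gamma>\<close>, the four-term difference at the midpoint collapses to
  \<open>\<langle>\<mu>(\<Gamma>\<^sub>1 + \<Gamma>\<^sub>0) - (X\<^sub>1 + X\<^sub>0), \<Gamma>\<^sub>1 - \<Gamma>\<^sub>0\<rangle>/4\<close>, and the evolution law turns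
  the left factor into \<open>-(2\<eta>/\<Delta>t)(\<Gamma>\<^sub>1 - \<Gamma>\<^sub>0)\<close>. The term \<open>G\<^sup>\<infinity>\<^sub>i\<^sub>s\<^sub>o\<close> cancels, and
  the identity is purely algebraic: only \<open>\<mu>, \<eta>, \<Delta>t > 0\<close> are used.\<close>

lemma ddot_eq_inner: "ddot A B = A \<bullet> B"
  by (simp add: ddot_def inner_vec_def)

lemma tnorm_eq_norm: "tnorm A = norm A"
  by (simp add: tnorm_def ddot_eq_inner norm_eq_sqrt_inner)

lemma Upsilon_eq_norm:
  "Upsilon mu S S0 C \<Gamma> = (norm ((S C - S0 + mu *\<^sub>R mat 1) - mu *\<^sub>R \<Gamma>))\<^sup>2 / (4 * mu)"
  by (simp add: Upsilon_def tnorm_eq_norm algebra_simps)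

lemma quadratic_midpoint_difference:
  fixes X0 X1 G0 G1 :: "'a::real_inner"
  assumes "mu \<noteq> 0"
  shows "(norm (X1 - mu *\<^sub>R G1))\<^sup>2 / (4 * mu) - (norm (X1 - mu *\<^sub>R ((1/2) *\<^sub>R (G0 + G1))))\<^sup>2 / (4 * mu)
       + (norm (X0 - mu *\<^sub>R ((1/2) *\<^sub>R (G0 + G1))))\<^sup>2 / (4 * mu) - (norm (X0 - mu *\<^sub>R G0))\<^sup>2 / (4 * mu)
       = (mu *\<^sub>R (G1 + G0) - (X1 + X0)) \<bullet> (G1 - G0) / 4"
  using assms by (simp add: power2_norm_eq_inner inner_simps inner_commute field_simps)

lemma midpoint_update_solves_evolution:
  fixes Y G0 G1 :: "'a::real_vector"
  assumes "dt \<noteq> 0" and "eta + mu * dt / 2 \<noteq> 0"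
    and "G1 = (dt / (eta + mu * dt / 2)) *\<^sub>R (Y - (mu / 2 - eta / dt) *\<^sub>R G0)"
  shows "(eta / dt) *\<^sub>R (G1 - G0) + (mu / 2) *\<^sub>R (G1 + G0) = Y"
proof -
  have "eta / dt + mu / 2 = (eta + mu * dt / 2) / dt"
    using assms(1) by (simp add: field_simps)
  then have inverse: "(eta / dt + mu / 2) * (dt / (eta + mu * dt / 2)) = 1"
    using assms(1,2) by simp
  have "(eta / dt + mu / 2) *\<^sub>R G1
      = ((eta / dt + mu / 2) * (dt / (eta + mu * dt / 2))) *\<^sub>R (Y - (mu / 2 - eta / dt) *\<^sub>R G0)"
    unfolding assms(3) by (rule scaleR_scaleR)
  also have "\<dots> = Y - (mu / 2 - eta / dt) *\<^sub>R G0"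
    unfolding inverse by (rule scaleR_one)
  finally show ?thesis
    by (simp add: algebra_simps)
qed

lemma midpoint_evolution_dissipation:
  fixes X0 X1 G0 G1 :: "'a::real_inner"
  assumes "mu \<noteq> 0" and "dt \<noteq> 0"
    and evolution: "(eta / dt) *\<^sub>R (G1 - G0) + (mu / 2) *\<^sub>R (G1 + G0) = (1/2) *\<^sub>R (X1 + X0)"
  shows "(norm (X1 - mu *\<^sub>R G1))\<^sup>2 / (4 * mu) - (norm (X1 - mu *\<^sub>R ((1/2) *\<^sub>R (G0 + G1))))\<^sup>2 / (4 * mu)
       + (norm (X0 - mu *\<^sub>R ((1/2) *\<^sub>R (G0 + G1))))\<^sup>2 / (4 * mu) - (norm (X0 - mu *\<^sub>R G0))\<^sup>2 / (4 * mu)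
       = - (1/2) * dt * (eta * (norm ((1/dt) *\<^sub>R (G1 - G0)))\<^sup>2)"
proof -
  have "mu *\<^sub>R (G1 + G0) - (X1 + X0) = - (2 * eta / dt) *\<^sub>R (G1 - G0)"
    using arg_cong[OF evolution, of "scaleR 2"] by (simp add: algebra_simps)
  then have "(mu *\<^sub>R (G1 + G0) - (X1 + X0)) \<bullet> (G1 - G0) / 4 = - (eta / (2 * dt)) * (norm (G1 - G0))\<^sup>2"
    by (simp add: power2_norm_eq_inner)
  also have "\<dots> = - (1/2) * dt * (eta * (norm (G1 - G0) / \<bar>dt\<bar>)\<^sup>2)"
    using assms(2) by (simp add: power_divide field_simps power2_eq_square)
  also have "norm (G1 - G0) / \<bar>dt\<bar> = norm ((1/dt) *\<^sub>R (G1 - G0))"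
    by simp
  finally show ?thesis
    unfolding quadratic_midpoint_difference[OF assms(1)] .
qed

lemma Upsilon_midpoint_dissipation:
  assumes "mu > 0" and "eta > 0" and "dt > 0"
    and G1: "G1 = (dt / (eta + mu * dt / 2)) *\<^sub>R
                 ((1/2) *\<^sub>R (S Cn1 + S Cn) - S0 - (mu / 2 - eta / dt) *\<^sub>R G0 + mu *\<^sub>R mat 1)"
  shows "Upsilon mu S S0 Cn1 G1 - Upsilon mu S S0 Cn1 ((1/2) *\<^sub>R (G0 + G1))
       + Upsilon mu S S0 Cn ((1/2) *\<^sub>R (G0 + G1)) - Upsilon mu S S0 Cn G0
       = - (1/2) * dt * (eta * (tnorm ((1/dt) *\<^sub>R (G1 - G0)))\<^sup>2)"
proof -
  define X where "X C = S C - S0 + mu *\<^sub>R mat 1" for C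
  have "eta + mu * dt / 2 > 0"
    using assms(1-3) by (simp add: add_pos_pos)
  moreover have "(1/2) *\<^sub>R (S Cn1 + S Cn) - S0 - (mu / 2 - eta / dt) *\<^sub>R G0 + mu *\<^sub>R mat 1
      = (1/2) *\<^sub>R (X Cn1 + X Cn) - (mu / 2 - eta / dt) *\<^sub>R G0"
    by (simp add: X_def algebra_simps flip: scaleR_2)
  ultimately have "(eta / dt) *\<^sub>R (G1 - G0) + (mu / 2) *\<^sub>R (G1 + G0) = (1/2) *\<^sub>R (X Cn1 + X Cn)"
    using assms(3) G1 by (intro midpoint_update_solves_evolution) auto
  from midpoint_evolution_dissipation[OF _ _ this] assms(1,3) show ?thesis
    by (simp add: Upsilon_eq_norm tnorm_eq_norm X_def)
qed

theorem lemma4: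
  fixes m :: nat and mu eta :: "nat \<Rightarrow> real" and S0 :: "nat \<Rightarrow> tensor"
    and G :: "nat \<Rightarrow> tensor \<Rightarrow> real" and S :: "nat \<Rightarrow> tensor \<Rightarrow> tensor"
    and Ginf :: "tensor \<Rightarrow> real"
    and Cn Cn1 :: tensor and dt :: real and \<Gamma>n :: "nat \<Rightarrow> tensor"
  assumes "m \<ge> 1"
    and "\<forall>\<alpha>\<in>{1..m}. mu \<alpha> > 0 \<and> eta \<alpha> > 0 \<and> sym_tensor (S0 \<alpha>)"
    and "\<forall>\<alpha>\<in>{1..m}. \<forall>C. spd_tensor C \<longrightarrow>
           sym_tensor (S \<alpha> C) \<and>
           (G \<alpha> has_derivative (\<lambda>H. ddot (S \<alpha> C) H / 2)) (at C within {A. sym_tensor A})"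
    and "spd_tensor Cn" and "spd_tensor Cn1" and "dt > 0"
    and "\<forall>\<alpha>\<in>{1..m}. sym_tensor (\<Gamma>n \<alpha>)"
  shows "let \<Gamma>n1 = (\<lambda>\<alpha>. (dt / (eta \<alpha> + mu \<alpha> * dt / 2)) *\<^sub>R
                 ((1/2) *\<^sub>R (S \<alpha> Cn1 + S \<alpha> Cn) - S0 \<alpha>
                  - (mu \<alpha> / 2 - eta \<alpha> / dt) *\<^sub>R \<Gamma>n \<alpha> + mu \<alpha> *\<^sub>R mat 1));
             \<Gamma>h = (\<lambda>\<alpha>. (1/2) *\<^sub>R (\<Gamma>n \<alpha> + \<Gamma>n1 \<alpha>))
         in G_iso m Ginf mu S S0 Cn1 \<Gamma>n1 - G_iso m Ginf mu S S0 Cn1 \<Gamma>h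
            + G_iso m Ginf mu S S0 Cn \<Gamma>h - G_iso m Ginf mu S S0 Cn \<Gamma>n
            = - (1/2) * dt * (\<Sum>\<alpha>=1..m. eta \<alpha> * (tnorm ((1/dt) *\<^sub>R (\<Gamma>n1 \<alpha> - \<Gamma>n \<alpha>)))\<^sup>2)"
proof -
  define \<Gamma>n1 where "\<Gamma>n1 \<alpha> = (dt / (eta \<alpha> + mu \<alpha> * dt / 2)) *\<^sub>R
      ((1/2) *\<^sub>R (S \<alpha> Cn1 + S \<alpha> Cn) - S0 \<alpha> - (mu \<alpha> / 2 - eta \<alpha> / dt) *\<^sub>R \<Gamma>n \<alpha> + mu \<alpha> *\<^sub>R mat 1)"
    for \<alpha>
  define \<Gamma>h where "\<Gamma>h \<alpha> = (1/2) *\<^sub>R (\<Gamma>n \<alpha> + \<Gamma>n1 \<alpha>)" for \<alpha>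
  define U where "U \<alpha> C \<Gamma> = Upsilon (mu \<alpha>) (S \<alpha>) (S0 \<alpha>) C \<Gamma>" for \<alpha> C \<Gamma>
  have "U \<alpha> Cn1 (\<Gamma>n1 \<alpha>) - U \<alpha> Cn1 (\<Gamma>h \<alpha>) + U \<alpha> Cn (\<Gamma>h \<alpha>) - U \<alpha> Cn (\<Gamma>n \<alpha>)
      = - (1/2) * dt * (eta \<alpha> * (tnorm ((1/dt) *\<^sub>R (\<Gamma>n1 \<alpha> - \<Gamma>n \<alpha>)))\<^sup>2)"
    if "\<alpha> \<in> {1..m}" for \<alpha>
    using Upsilon_midpoint_dissipation[where S = "S \<alpha>", OF _ _ assms(6) \<Gamma>n1_def [of \<alpha>]] assms(2) that
    by (simp add: U_def \<Gamma>h_def)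
  then have "(\<Sum>\<alpha>=1..m. U \<alpha> Cn1 (\<Gamma>n1 \<alpha>) - U \<alpha> Cn1 (\<Gamma>h \<alpha>) + U \<alpha> Cn (\<Gamma>h \<alpha>) - U \<alpha> Cn (\<Gamma>n \<alpha>))
      = - (1/2) * dt * (\<Sum>\<alpha>=1..m. eta \<alpha> * (tnorm ((1/dt) *\<^sub>R (\<Gamma>n1 \<alpha> - \<Gamma>n \<alpha>)))\<^sup>2)"
    by (simp add: sum_distrib_left)
  then show ?thesis
    by (simp add: Let_def G_iso_def \<Gamma>n1_def [symmetric] \<Gamma>h_def [symmetric] U_def [symmetric]
        sum_subtractf sum.distrib)
qed

end
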